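(* Let $\mathcal I$ be a co-analytic ideal on $\omega$ and $F:\omega^\omega\to\mathcal I^+$ a continuous surjection. Then the games $\mathcal H_{\mathsf{Cat}}(\mathcal I,F)$ and $\mathcal G_{\mathsf{Cat}}(\mathcal I)$ are determined.
   Context: $\mathcal P(\omega)$ is identified with $2^\omega$; $\mathcal I$ is co-analytic as a subset of it, and $\mathcal I^+=\mathcal P(\omega)\setminus\mathcal I$. The game $\mathcal G_{\mathsf{Cat}}(\mathcal I)$: in round $n\in\omega$ Player I plays $A_n\in\mathcal I$ and Player II plays $b_n\in\omega\setminus A_n$; II wins iff $\{b_n:n\in\omega\}\in\mathcal I^+$. Let $R$ be the set of functions $f:\omega\to\omega\cup\{-1\}$ with $f(n)<n$ for all $n$ and $\{n:f(n)\ne-1\}$ infinite; for $f\in R$, enumerating $\{n:f(n)\ne-1\}=\{n_i:i\in\omega\}$ increasingly, let $\tilde f(i)=f(n_i)$. The game $\mathcal H_{\mathsf{Cat}}(\mathcal I,F)$: in round $n$ Player I plays $A_n\in\mathcal I$ and Player II plays a pair $(b_n,m_n)$ with $b_n\in\omega\setminus A_n$ and $m_n\in n\cup\{-1\}$; letting $g(n)=m_n$, Player II wins iff $\{n:m_n\ne-1\}$ is infinite and $F(\tilde g)=\{b_n:n\in\omega\}$. A game is determined if one of the players has a winning strategy. *)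

theory Defs
  imports "HOL-Analysis.Analysis" "HOL-Library.Infinite_Set"
begin

text \<open>P(omega) is identified with the Cantor space 2^omega: a set S of naturals is
  identified with its 0/1-valued characteristic sequence, viewed inside the Baire space
  nat => nat (product topology of discrete nat); the subspace of 0/1 sequences is the
  Cantor space with its product topology.\<close>

definition chi :: "nat set \<Rightarrow> (nat \<Rightarrow> nat)" where
  "chi S = (\<lambda>n. if n \<in> S then 1 else 0)"

definition cont_into_P :: "((nat \<Rightarrow> nat) \<Rightarrow> nat set) \<Rightarrow> bool" where
  "cont_into_P F \<longleftrightarrow> continuous_on UNIV (\<lambda>x. chi (F x))"

definition analytic_P :: "nat set set \<Rightarrow> bool" where
  "analytic_P A \<longleftrightarrow> A = {} \<or> (\<exists>f. cont_into_P f \<and> range f = A)"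

definition coanalytic_P :: "nat set set \<Rightarrow> bool" where
  "coanalytic_P A \<longleftrightarrow> analytic_P (UNIV - A)"

definition ideal_on_omega :: "nat set set \<Rightarrow> bool" where
  "ideal_on_omega I \<longleftrightarrow>
     (\<forall>A B. A \<in> I \<longrightarrow> B \<subseteq> A \<longrightarrow> B \<in> I) \<and>
     (\<forall>A B. A \<in> I \<longrightarrow> B \<in> I \<longrightarrow> A \<union> B \<in> I) \<and>
     (\<forall>A. finite A \<longrightarrow> A \<in> I) \<and>
     UNIV \<notin> I"

definition Iplus :: "nat set set \<Rightarrow> nat set set" where
  "Iplus I = UNIV - I"

definition pref :: "(nat \<Rightarrow> 'a) \<Rightarrow> nat \<Rightarrow> 'a list" where
  "pref s n = map s [0..<n]"

text \<open>A strategy for Player I maps the list of Player II's previous moves [b_0,...,b_{n-1}]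
  to A_n, which must lie in I.  A strategy for Player II maps the list of Player I's moves
  [A_0,...,A_n] to b_n, which must avoid A_n whenever all A_i are legal (in I).\<close>

definition G_I_strategy :: "nat set set \<Rightarrow> (nat list \<Rightarrow> nat set) \<Rightarrow> bool" where
  "G_I_strategy I \<sigma> \<longleftrightarrow> (\<forall>s. \<sigma> s \<in> I)"

definition G_I_winning :: "nat set set \<Rightarrow> (nat list \<Rightarrow> nat set) \<Rightarrow> bool" where
  "G_I_winning I \<sigma> \<longleftrightarrow> G_I_strategy I \<sigma> \<and>
     (\<forall>b::nat \<Rightarrow> nat. (\<forall>n. b n \<notin> \<sigma> (pref b n)) \<longrightarrow> range b \<notin> Iplus I)"

definition G_II_strategy :: "nat set set \<Rightarrow> (nat set list \<Rightarrow> nat) \<Rightarrow> bool" where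
  "G_II_strategy I \<tau> \<longleftrightarrow>
     (\<forall>As. As \<noteq> [] \<longrightarrow> set As \<subseteq> I \<longrightarrow> \<tau> As \<notin> last As)"

definition G_II_winning :: "nat set set \<Rightarrow> (nat set list \<Rightarrow> nat) \<Rightarrow> bool" where
  "G_II_winning I \<tau> \<longleftrightarrow> G_II_strategy I \<tau> \<and>
     (\<forall>A::nat \<Rightarrow> nat set. (\<forall>n. A n \<in> I) \<longrightarrow>
        range (\<lambda>n. \<tau> (pref A (Suc n))) \<in> Iplus I)"

definition G_Cat_determined :: "nat set set \<Rightarrow> bool" where
  "G_Cat_determined I \<longleftrightarrow> (\<exists>\<sigma>. G_I_winning I \<sigma>) \<or> (\<exists>\<tau>. G_II_winning I \<tau>)"

text \<open>For g : omega -> omega \<union> {-1} (encoded as int-valued) with infinitely many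
  non-(-1) values, tilde g enumerates the values g(n_i) where n_0 < n_1 < ... enumerate
  {n. g n \<noteq> -1}.\<close>
definition tilde :: "(nat \<Rightarrow> int) \<Rightarrow> nat \<Rightarrow> nat" where
  "tilde g i = nat (g (enumerate {n. g n \<noteq> -1} i))"

definition H_legal :: "nat set \<Rightarrow> nat \<Rightarrow> nat \<times> int \<Rightarrow> bool" where
  "H_legal A n bm \<longleftrightarrow> fst bm \<notin> A \<and> -1 \<le> snd bm \<and> snd bm < int n"

definition H_II_wins :: "((nat \<Rightarrow> nat) \<Rightarrow> nat set) \<Rightarrow> (nat \<Rightarrow> nat \<times> int) \<Rightarrow> bool" where
  "H_II_wins F bm \<longleftrightarrow>
     infinite {n. snd (bm n) \<noteq> -1} \<and>
     F (tilde (\<lambda>n. snd (bm n))) = range (\<lambda>n. fst (bm n))"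

definition H_I_strategy :: "nat set set \<Rightarrow> ((nat \<times> int) list \<Rightarrow> nat set) \<Rightarrow> bool" where
  "H_I_strategy I \<sigma> \<longleftrightarrow> (\<forall>s. \<sigma> s \<in> I)"

definition H_I_winning ::
  "nat set set \<Rightarrow> ((nat \<Rightarrow> nat) \<Rightarrow> nat set) \<Rightarrow> ((nat \<times> int) list \<Rightarrow> nat set) \<Rightarrow> bool" where
  "H_I_winning I F \<sigma> \<longleftrightarrow> H_I_strategy I \<sigma> \<and>
     (\<forall>bm::nat \<Rightarrow> nat \<times> int. (\<forall>n. H_legal (\<sigma> (pref bm n)) n (bm n)) \<longrightarrow> \<not> H_II_wins F bm)"

definition H_II_strategy :: "nat set set \<Rightarrow> (nat set list \<Rightarrow> nat \<times> int) \<Rightarrow> bool" where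
  "H_II_strategy I \<tau> \<longleftrightarrow>
     (\<forall>As. As \<noteq> [] \<longrightarrow> set As \<subseteq> I \<longrightarrow> H_legal (last As) (length As - 1) (\<tau> As))"

definition H_II_winning ::
  "nat set set \<Rightarrow> ((nat \<Rightarrow> nat) \<Rightarrow> nat set) \<Rightarrow> (nat set list \<Rightarrow> nat \<times> int) \<Rightarrow> bool" where
  "H_II_winning I F \<tau> \<longleftrightarrow> H_II_strategy I \<tau> \<and>
     (\<forall>A::nat \<Rightarrow> nat set. (\<forall>n. A n \<in> I) \<longrightarrow> H_II_wins F (\<lambda>n. \<tau> (pref A (Suc n))))"

definition H_Cat_determined :: "nat set set \<Rightarrow> ((nat \<Rightarrow> nat) \<Rightarrow> nat set) \<Rightarrow> bool" where
  "H_Cat_determined I F \<longleftrightarrow> (\<exists>\<sigma>. H_I_winning I F \<sigma>) \<or> (\<exists>\<tau>. H_II_winning I F \<tau>)"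

end

theory Submission
  imports Defs
begin

text \<open>For continuous \<open>F\<close>, Player I wins a play of \<open>\<H>\<^sub>C\<^sub>a\<^sub>t(I, F)\<close> iff \<open>g\<close> takes values
  other than \<open>-1\<close> only finitely often, or some \<open>k \<in> F x\<close> is never played, or some \<open>b\<^sub>n \<notin> F x\<close>,
  where \<open>x = tilde g\<close>.  Each of the last two events is witnessed by an initial segment of \<open>x\<close>
  deciding the membership of one number in \<open>F x\<close>, so Player I's payoff set is a countable union
  of closed sets, and the game is determined by the determinacy of \<open>\<Sigma>\<^sup>0\<^sub>2\<close> games.  The latter
  follows from Gale-Stewart by the usual ranking argument: either Player I can force his way
  through a well-founded hierarchy of positions into some closed set for good, or Player II can
  leave the closed sets one after the other.

  A winning strategy in \<open>\<H>\<^sub>C\<^sub>a\<^sub>t(I, F)\<close> yields one in \<open>\<G>\<^sub>C\<^sub>a\<^sub>t(I)\<close>.  Player II forgets her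
  \<open>m\<close>-moves, since \<open>F\<close> takes values in \<open>I\<^sup>+\<close>.  Player I answers with the union of his answers
  to all the finitely many possible sequences of \<open>m\<close>-moves; since every \<open>x\<close> is coded by a
  legal sequence of \<open>m\<close>-moves and \<open>F\<close> maps onto \<open>I\<^sup>+\<close>, this defeats every play of Player II.\<close>

lemma pref_0 [simp]: "pref p 0 = []"
  by (simp add: pref_def)

lemma pref_Suc: "pref p (Suc n) = pref p n @ [p n]"
  by (simp add: pref_def)

lemma length_pref [simp]: "length (pref p n) = n"
  by (simp add: pref_def)

lemma nth_pref [simp]: "i < n \<Longrightarrow> pref p n ! i = p i"
  by (simp add: pref_def)

lemma take_pref [simp]: "k \<le> n \<Longrightarrow> take k (pref p n) = pref p k"
  by (simp add: pref_def take_map)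

lemma pref_eq_iff: "pref p n = pref q n \<longleftrightarrow> (\<forall>i<n. p i = q i)"
  by (auto simp: pref_def)

text \<open>The phase of a history \<open>h\<close> at time \<open>K\<close> is a pair \<open>(n, j)\<close>: since time \<open>j\<close>, all
  prefixes seen so far lie in \<open>T n\<close>.\<close>

fun phase_list :: "(nat \<Rightarrow> 'c list set) \<Rightarrow> 'c list \<Rightarrow> nat \<Rightarrow> nat \<times> nat" where
  "phase_list T h 0 = (0, 0)"
| "phase_list T h (Suc K) = (case phase_list T h K of (n, j) \<Rightarrow>
      if \<exists>i\<le>Suc K. take i h \<notin> T n then (Suc n, Suc K) else (n, j))"

definition phase :: "(nat \<Rightarrow> 'c list set) \<Rightarrow> (nat \<Rightarrow> 'c) \<Rightarrow> nat \<Rightarrow> nat \<times> nat" where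
  "phase T p K = phase_list T (pref p K) K"

lemma phase_list_cong: "\<forall>i\<le>K. take i h = take i h' \<Longrightarrow> phase_list T h K = phase_list T h' K"
  by (induction K) (auto split: prod.splits)

lemma phase_list_pref: "K \<le> M \<Longrightarrow> phase_list T (pref p M) K = phase T p K"
  unfolding phase_def by (rule phase_list_cong) auto

lemma phase_0: "phase T p 0 = (0, 0)"
  by (simp add: phase_def)

lemma phase_Suc: "phase T p (Suc K) = (case phase T p K of (n, j) \<Rightarrow>
      if \<exists>i\<le>Suc K. pref p i \<notin> T n then (Suc n, Suc K) else (n, j))"
  using phase_list_pref[of K "Suc K" T p] by (auto simp: phase_def split: prod.splits)

lemma phase_constant:
  assumes "phase T p K = (n, j)"
  shows "j \<le> K" and "j \<le> m \<Longrightarrow> m \<le> K \<Longrightarrow> phase T p m = (n, j)"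
proof -
  have "j \<le> K \<and> (\<forall>m. j \<le> m \<longrightarrow> m \<le> K \<longrightarrow> phase T p m = (n, j))"
    using assms
  proof (induction K arbitrary: n j)
    case 0
    then show ?case by (auto simp: phase_0)
  next
    case (Suc K)
    obtain n' j' where prev: "phase T p K = (n', j')"
      by force
    show ?case
    proof (cases "\<exists>i\<le>Suc K. pref p i \<notin> T n'")
      case True
      then show ?thesis
        using Suc.prems prev by (auto simp: phase_Suc)
    next
      case False
      then have "phase T p (Suc K) = (n', j')"
        using prev by (simp add: phase_Suc)
      then show ?thesis
        using Suc.prems Suc.IH[OF prev] by (auto simp: le_Suc_eq)
    qed
  qed
  then show "j \<le> K" and "j \<le> m \<Longrightarrow> m \<le> K \<Longrightarrow> phase T p m = (n, j)"
    by auto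
qed

lemma phase_inside:
  assumes "phase T p K = (n, j)" and "j < K" and "i \<le> K"
  shows "pref p i \<in> T n"
proof -
  obtain m where K: "K = Suc m" and "j \<le> m"
    using assms(2) by (cases K) auto
  then have "phase T p m = (n, j)"
    using phase_constant(2)[OF assms(1)] by simp
  then show ?thesis
    using assms(1,3) K by (auto simp: phase_Suc split: if_splits)
qed

primrec continue_history :: "(nat \<Rightarrow> 'c) \<Rightarrow> nat \<Rightarrow> ('c list \<Rightarrow> 'c) \<Rightarrow> nat \<Rightarrow> 'c list" where
  "continue_history p K f 0 = []"
| "continue_history p K f (Suc k) =
     continue_history p K f k @ [if k < K then p k else f (continue_history p K f k)]"

definition continue_play :: "(nat \<Rightarrow> 'c) \<Rightarrow> nat \<Rightarrow> ('c list \<Rightarrow> 'c) \<Rightarrow> nat \<Rightarrow> 'c" where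
  "continue_play p K f k = continue_history p K f (Suc k) ! k"

lemma length_continue_history [simp]: "length (continue_history p K f k) = k"
  by (induction k) auto

lemma pref_continue_play: "pref (continue_play p K f) k = continue_history p K f k"
  by (induction k) (simp_all add: pref_Suc continue_play_def nth_append)

lemma continue_play_less: "k < K \<Longrightarrow> continue_play p K f k = p k"
  by (simp add: continue_play_def nth_append)

lemma continue_play_ge: "K \<le> k \<Longrightarrow> continue_play p K f k = f (pref (continue_play p K f) k)"
  by (simp add: continue_play_def nth_append pref_continue_play)

lemma pref_continue_play_le: "k \<le> K \<Longrightarrow> pref (continue_play p K f) k = pref p k"
  by (simp add: pref_eq_iff continue_play_less)

locale legal_game =
  fixes moves_I :: "('a \<times> 'b) list \<Rightarrow> 'a set"
    and moves_II :: "('a \<times> 'b) list \<Rightarrow> 'a \<Rightarrow> 'b set"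
  assumes moves_I_nonempty: "moves_I h \<noteq> {}"
    and moves_II_nonempty: "a \<in> moves_I h \<Longrightarrow> moves_II h a \<noteq> {}"
begin

definition strategy_I :: "(('a \<times> 'b) list \<Rightarrow> 'a) \<Rightarrow> bool" where
  "strategy_I \<sigma> \<longleftrightarrow> (\<forall>h. \<sigma> h \<in> moves_I h)"

definition strategy_II :: "(('a \<times> 'b) list \<Rightarrow> 'a \<Rightarrow> 'b) \<Rightarrow> bool" where
  "strategy_II \<tau> \<longleftrightarrow> (\<forall>h a. a \<in> moves_I h \<longrightarrow> \<tau> h a \<in> moves_II h a)"

definition legal_play :: "(nat \<Rightarrow> 'a \<times> 'b) \<Rightarrow> bool" where
  "legal_play p \<longleftrightarrow>
     (\<forall>n. fst (p n) \<in> moves_I (pref p n) \<and> snd (p n) \<in> moves_II (pref p n) (fst (p n)))"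

definition follows_I :: "(('a \<times> 'b) list \<Rightarrow> 'a) \<Rightarrow> (nat \<Rightarrow> 'a \<times> 'b) \<Rightarrow> nat \<Rightarrow> bool" where
  "follows_I \<sigma> p j \<longleftrightarrow> (\<forall>k\<ge>j. fst (p k) = \<sigma> (pref p k))"

definition follows_II :: "(('a \<times> 'b) list \<Rightarrow> 'a \<Rightarrow> 'b) \<Rightarrow> (nat \<Rightarrow> 'a \<times> 'b) \<Rightarrow> nat \<Rightarrow> bool" where
  "follows_II \<tau> p j \<longleftrightarrow> (\<forall>k\<ge>j. snd (p k) = \<tau> (pref p k) (fst (p k)))"

lemma ex_strategy_I: "\<exists>\<sigma>. strategy_I \<sigma>"
proof -
  have "strategy_I (\<lambda>h. SOME a. a \<in> moves_I h)"
    unfolding strategy_I_def using moves_I_nonempty by (simp add: some_in_eq)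
  then show ?thesis
    by blast
qed

lemma ex_strategy_II: "\<exists>\<tau>. strategy_II \<tau>"
proof -
  have "strategy_II (\<lambda>h a. SOME b. b \<in> moves_II h a)"
    unfolding strategy_II_def using moves_II_nonempty by (simp add: some_in_eq)
  then show ?thesis
    by blast
qed

lemma exists_continuation:
  assumes "legal_play p" and "strategy_I \<sigma>" and "strategy_II \<tau>"
  obtains q where "legal_play q" and "\<forall>k<K. q k = p k"
    and "follows_I \<sigma> q K" and "follows_II \<tau> q K"
proof
  define q where "q = continue_play p K (\<lambda>h. (\<sigma> h, \<tau> h (\<sigma> h)))"
  have late: "q k = (\<sigma> (pref q k), \<tau> (pref q k) (\<sigma> (pref q k)))" if "K \<le> k" for k
    using that unfolding q_def by (rule continue_play_ge)
  have early: "q k = p k" "pref q k = pref p k" if "k < K" for k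
    using that unfolding q_def by (simp_all add: continue_play_less pref_continue_play_le)
  show "\<forall>k<K. q k = p k"
    using early by blast
  show "follows_I \<sigma> q K" and "follows_II \<tau> q K"
    unfolding follows_I_def follows_II_def using late by simp_all
  show "legal_play q"
    unfolding legal_play_def
  proof
    fix k
    show "fst (q k) \<in> moves_I (pref q k) \<and> snd (q k) \<in> moves_II (pref q k) (fst (q k))"
    proof (cases "k < K")
      case True
      then show ?thesis
        using early assms(1) unfolding legal_play_def by simp
    next
      case False
      then show ?thesis
        using late assms(2,3) unfolding strategy_I_def strategy_II_def by simp
    qed
  qed
qed

section \<open>Closed games\<close>

definition stays_with :: "(('a \<times> 'b) list \<Rightarrow> bool) \<Rightarrow> ('a \<times> 'b) list \<Rightarrow> (('a \<times> 'b) list \<Rightarrow> 'a) \<Rightarrow> bool" where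
  "stays_with Q s \<sigma> \<longleftrightarrow> (\<forall>p. legal_play p \<and> pref p (length s) = s \<and> follows_I \<sigma> p (length s)
     \<longrightarrow> (\<forall>k>length s. Q (pref p k)))"

definition escapes_with ::
  "(('a \<times> 'b) list \<Rightarrow> bool) \<Rightarrow> ('a \<times> 'b) list \<Rightarrow> (('a \<times> 'b) list \<Rightarrow> 'a \<Rightarrow> 'b) \<Rightarrow> bool" where
  "escapes_with Q s \<tau> \<longleftrightarrow> (\<forall>p. legal_play p \<and> pref p (length s) = s \<and> follows_II \<tau> p (length s)
     \<longrightarrow> (\<exists>k>length s. \<not> Q (pref p k)))"

definition I_can_stay :: "(('a \<times> 'b) list \<Rightarrow> bool) \<Rightarrow> ('a \<times> 'b) list \<Rightarrow> bool" where
  "I_can_stay Q s \<longleftrightarrow> (\<exists>\<sigma>. strategy_I \<sigma> \<and> stays_with Q s \<sigma>)"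

definition II_can_escape :: "(('a \<times> 'b) list \<Rightarrow> bool) \<Rightarrow> ('a \<times> 'b) list \<Rightarrow> bool" where
  "II_can_escape Q s \<longleftrightarrow> (\<exists>\<tau>. strategy_II \<tau> \<and> escapes_with Q s \<tau>)"

lemma escapes_with_one_round:
  assumes "\<And>a. a \<in> moves_I s \<Longrightarrow>
    \<not> Q (s @ [(a, answer a)]) \<or> escapes_with Q (s @ [(a, answer a)]) (escape_from (s @ [(a, answer a)]))"
  shows "escapes_with Q s (\<lambda>h a. if h = s then answer a else escape_from (take (Suc (length s)) h) h a)"
    (is "escapes_with Q s ?\<tau>")
  unfolding escapes_with_def
proof (intro allI impI)
  fix p assume p: "legal_play p \<and> pref p (length s) = s \<and> follows_II ?\<tau> p (length s)"
  let ?a = "fst (p (length s))" and ?t = "pref p (Suc (length s))"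
  have "?a \<in> moves_I s"
    using p unfolding legal_play_def by metis
  moreover have "?t = s @ [(?a, answer ?a)]"
    using p unfolding follows_II_def by (simp add: pref_Suc prod_eq_iff)
  ultimately have "\<not> Q ?t \<or> escapes_with Q ?t (escape_from ?t)"
    using assms by simp
  then show "\<exists>k>length s. \<not> Q (pref p k)"
  proof
    assume "\<not> Q ?t"
    then show ?thesis
      by (intro exI[of _ "Suc (length s)"]) simp
  next
    assume escapes: "escapes_with Q ?t (escape_from ?t)"
    have "follows_II (escape_from ?t) p (Suc (length s))"
      using p unfolding follows_II_def by (auto dest: arg_cong[of _ _ length])
    then obtain k where "k > Suc (length s)" "\<not> Q (pref p k)"
      using escapes p unfolding escapes_with_def by auto
    then show ?thesis
      by (intro exI[of _ k]) simp
  qed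
qed

lemma II_can_escape_one_step:
  assumes "\<forall>a\<in>moves_I s. \<exists>b\<in>moves_II s a. \<not> Q (s @ [(a, b)]) \<or> II_can_escape Q (s @ [(a, b)])"
  shows "II_can_escape Q s"
proof -
  define answer where "answer a =
     (SOME b. b \<in> moves_II s a \<and> (\<not> Q (s @ [(a, b)]) \<or> II_can_escape Q (s @ [(a, b)])))" for a
  define escape_from where "escape_from t =
     (SOME \<tau>. strategy_II \<tau> \<and> (II_can_escape Q t \<longrightarrow> escapes_with Q t \<tau>))" for t
  have answer: "answer a \<in> moves_II s a \<and>
      (\<not> Q (s @ [(a, answer a)]) \<or> II_can_escape Q (s @ [(a, answer a)]))"
    if "a \<in> moves_I s" for a
    using assms that unfolding answer_def by (metis (no_types, lifting) someI_ex)
  have escape_from: "strategy_II (escape_from t) \<and> (II_can_escape Q t \<longrightarrow> escapes_with Q t (escape_from t))"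
    for t
  proof -
    have "\<exists>\<tau>. strategy_II \<tau> \<and> (II_can_escape Q t \<longrightarrow> escapes_with Q t \<tau>)"
      using ex_strategy_II unfolding II_can_escape_def by blast
    then show ?thesis
      unfolding escape_from_def by (rule someI_ex)
  qed
  have "strategy_II (\<lambda>h a. if h = s then answer a else escape_from (take (Suc (length s)) h) h a)"
    using answer escape_from unfolding strategy_II_def by simp
  moreover have "escapes_with Q s
      (\<lambda>h a. if h = s then answer a else escape_from (take (Suc (length s)) h) h a)"
    using answer escape_from by (intro escapes_with_one_round) blast
  ultimately show ?thesis
    unfolding II_can_escape_def by blast
qed

definition safe_move :: "(('a \<times> 'b) list \<Rightarrow> bool) \<Rightarrow> ('a \<times> 'b) list \<Rightarrow> 'a \<Rightarrow> bool" where
  "safe_move Q h a \<longleftrightarrow> (\<forall>b\<in>moves_II h a. Q (h @ [(a, b)]) \<and> \<not> II_can_escape Q (h @ [(a, b)]))"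

definition stay_strategy :: "(('a \<times> 'b) list \<Rightarrow> bool) \<Rightarrow> ('a \<times> 'b) list \<Rightarrow> 'a" where
  "stay_strategy Q h = (SOME a. a \<in> moves_I h \<and> (\<not> II_can_escape Q h \<longrightarrow> safe_move Q h a))"

lemma stay_strategy_move:
  "stay_strategy Q h \<in> moves_I h \<and> (\<not> II_can_escape Q h \<longrightarrow> safe_move Q h (stay_strategy Q h))"
proof -
  have "\<exists>a. a \<in> moves_I h \<and> (\<not> II_can_escape Q h \<longrightarrow> safe_move Q h a)"
  proof (cases "II_can_escape Q h")
    case True
    then show ?thesis
      using moves_I_nonempty by blast
  next
    case False
    then show ?thesis
      using II_can_escape_one_step[of h Q] unfolding safe_move_def by blast
  qed
  then show ?thesis
    unfolding stay_strategy_def by (rule someI_ex)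
qed

theorem closed_game_determined: "I_can_stay Q s \<or> II_can_escape Q s"
proof (cases "II_can_escape Q s")
  case False
  have "stays_with Q s (stay_strategy Q)"
    unfolding stays_with_def
  proof (rule allI, rule impI)
    fix p assume p: "legal_play p \<and> pref p (length s) = s \<and> follows_I (stay_strategy Q) p (length s)"
    have "\<not> II_can_escape Q (pref p k) \<and> (k > length s \<longrightarrow> Q (pref p k))" if "length s \<le> k" for k
      using that
    proof (induction k rule: dec_induct)
      case base
      then show ?case
        using p False by simp
    next
      case (step k)
      then have "safe_move Q (pref p k) (fst (p k))"
        using p stay_strategy_move unfolding follows_I_def by auto
      moreover have "snd (p k) \<in> moves_II (pref p k) (fst (p k))"
        using p unfolding legal_play_def by blast
      ultimately have "Q (pref p (Suc k)) \<and> \<not> II_can_escape Q (pref p (Suc k))"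
        unfolding safe_move_def pref_Suc by (metis prod.collapse)
      then show ?case
        by simp
    qed
    then show "\<forall>k>length s. Q (pref p k)"
      by simp
  qed
  moreover have "strategy_I (stay_strategy Q)"
    unfolding strategy_I_def using stay_strategy_move by blast
  ultimately show ?thesis
    unfolding I_can_stay_def by blast
qed simp

end

section \<open>Determinacy of \<open>\<Sigma>\<^sup>0\<^sub>2\<close> games\<close>

definition in_Sigma2 :: "(nat \<Rightarrow> 'c list set) \<Rightarrow> (nat \<Rightarrow> 'c) \<Rightarrow> bool" where
  "in_Sigma2 T p \<longleftrightarrow> (\<exists>n. \<forall>k. pref p k \<in> T n)"

definition reach_or_stay :: "(nat \<Rightarrow> 'c list set) \<Rightarrow> 'c list set \<Rightarrow> nat \<Rightarrow> nat \<Rightarrow> 'c list \<Rightarrow> bool" where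
  "reach_or_stay T W n m h \<longleftrightarrow>
     (\<exists>j. m < j \<and> j \<le> length h \<and> take j h \<in> W) \<or> (\<forall>i\<le>length h. take i h \<in> T n)"

context legal_game
begin

definition switch_I :: "nat \<Rightarrow> (('a \<times> 'b) list \<Rightarrow> bool) \<Rightarrow> (('a \<times> 'b) list \<Rightarrow> ('a \<times> 'b) list \<Rightarrow> 'a)
    \<Rightarrow> (('a \<times> 'b) list \<Rightarrow> 'a) \<Rightarrow> ('a \<times> 'b) list \<Rightarrow> 'a" where
  "switch_I m W \<sigma>W \<sigma>0 h = (if \<exists>j. m < j \<and> j \<le> length h \<and> W (take j h)
     then \<sigma>W (take (LEAST j. m < j \<and> j \<le> length h \<and> W (take j h)) h) h else \<sigma>0 h)"

lemma strategy_I_switch_I: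
  assumes "strategy_I \<sigma>0" and "\<And>t. strategy_I (\<sigma>W t)"
  shows "strategy_I (switch_I m W \<sigma>W \<sigma>0)"
  using assms unfolding strategy_I_def switch_I_def by simp

lemma switch_I_before:
  assumes "\<forall>j. m < j \<longrightarrow> j \<le> k \<longrightarrow> \<not> W (pref p j)"
  shows "switch_I m W \<sigma>W \<sigma>0 (pref p k) = \<sigma>0 (pref p k)"
  using assms unfolding switch_I_def by auto

lemma switch_I_after:
  assumes "m < j0" and "W (pref p j0)" and "\<forall>j. m < j \<longrightarrow> j < j0 \<longrightarrow> \<not> W (pref p j)"
    and "j0 \<le> k"
  shows "switch_I m W \<sigma>W \<sigma>0 (pref p k) = \<sigma>W (pref p j0) (pref p k)"
proof -
  have "(LEAST j. m < j \<and> j \<le> k \<and> W (take j (pref p k))) = j0"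
    using assms by (intro Least_equality) (auto simp: not_le[symmetric])
  then show ?thesis
    using assms unfolding switch_I_def by auto
qed

definition wins_I_with :: "(nat \<Rightarrow> ('a \<times> 'b) list set) \<Rightarrow> ('a \<times> 'b) list \<Rightarrow> (('a \<times> 'b) list \<Rightarrow> 'a) \<Rightarrow> bool" where
  "wins_I_with T s \<sigma> \<longleftrightarrow> (\<forall>p. legal_play p \<and> pref p (length s) = s \<and> follows_I \<sigma> p (length s)
     \<longrightarrow> in_Sigma2 T p)"

definition I_wins_from :: "(nat \<Rightarrow> ('a \<times> 'b) list set) \<Rightarrow> ('a \<times> 'b) list \<Rightarrow> bool" where
  "I_wins_from T s \<longleftrightarrow> (\<exists>\<sigma>. strategy_I \<sigma> \<and> wins_I_with T s \<sigma>)"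

definition rank_step :: "(nat \<Rightarrow> ('a \<times> 'b) list set) \<Rightarrow> ('a \<times> 'b) list set \<Rightarrow> ('a \<times> 'b) list set" where
  "rank_step T W = {s. \<exists>n. I_can_stay (reach_or_stay T W n (length s)) s}"

text \<open>The positions of ordinal rank in the usual proof of \<open>\<Sigma>\<^sup>0\<^sub>2\<close> determinacy: Player I can
  force the play into \<open>T n\<close> for good, or into a position of smaller rank.\<close>

definition I_region :: "(nat \<Rightarrow> ('a \<times> 'b) list set) \<Rightarrow> ('a \<times> 'b) list set" where
  "I_region T = lfp (rank_step T)"

lemma mono_rank_step: "mono (rank_step T)"
proof (rule monoI)
  fix W W' :: "('a \<times> 'b) list set"
  assume "W \<subseteq> W'"
  then have "reach_or_stay T W n m h \<Longrightarrow> reach_or_stay T W' n m h" for n m h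
    unfolding reach_or_stay_def by blast
  then have "stays_with (reach_or_stay T W n m) s \<sigma> \<Longrightarrow> stays_with (reach_or_stay T W' n m) s \<sigma>"
    for n m s \<sigma>
    unfolding stays_with_def by blast
  then show "rank_step T W \<subseteq> rank_step T W'"
    unfolding rank_step_def I_can_stay_def by blast
qed

lemma I_region_fixpoint: "rank_step T (I_region T) = I_region T"
  unfolding I_region_def using mono_rank_step by (rule lfp_fixpoint)

lemma wins_I_with_switch_I:
  assumes stay: "stays_with (reach_or_stay T {s. I_wins_from T s} n (length s)) s \<sigma>0"
    and \<sigma>W: "\<And>t. I_wins_from T t \<Longrightarrow> wins_I_with T t (\<sigma>W t)"
  shows "wins_I_with T s (switch_I (length s) (I_wins_from T) \<sigma>W \<sigma>0)"
  unfolding wins_I_with_def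
proof (intro allI impI)
  fix p
  assume p: "legal_play p \<and> pref p (length s) = s
    \<and> follows_I (switch_I (length s) (I_wins_from T) \<sigma>W \<sigma>0) p (length s)"
  show "in_Sigma2 T p"
  proof (cases "\<exists>j>length s. I_wins_from T (pref p j)")
    case True
    define j0 where "j0 = (LEAST j. length s < j \<and> I_wins_from T (pref p j))"
    have j0: "length s < j0" "I_wins_from T (pref p j0)"
      using LeastI_ex[OF True[unfolded Bex_def]] unfolding j0_def by auto
    have before: "\<forall>j. length s < j \<longrightarrow> j < j0 \<longrightarrow> \<not> I_wins_from T (pref p j)"
      unfolding j0_def using not_less_Least by blast
    have "fst (p k) = \<sigma>W (pref p j0) (pref p k)" if "j0 \<le> k" for k
      using p j0 that switch_I_after[OF j0(1,2) before that] unfolding follows_I_def by simp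
    then have "follows_I (\<sigma>W (pref p j0)) p j0"
      unfolding follows_I_def by blast
    then show ?thesis
      using \<sigma>W[OF j0(2)] j0 p unfolding wins_I_with_def by simp
  next
    case False
    then have "follows_I \<sigma>0 p (length s)"
      using p switch_I_before[of "length s" _ "I_wins_from T"] unfolding follows_I_def by simp
    then have reach: "reach_or_stay T {s. I_wins_from T s} n (length s) (pref p k)"
      if "k > length s" for k
      using stay p that unfolding stays_with_def by blast
    have in_T: "\<forall>i\<le>k. pref p i \<in> T n" if "k > length s" for k
      using False reach[OF that] unfolding reach_or_stay_def by auto
    have "pref p i \<in> T n" for i
      using in_T[of "Suc (max i (length s))"] by simp
    then show ?thesis
      unfolding in_Sigma2_def by blast
  qed
qed

lemma rank_step_I_wins_from: "rank_step T {s. I_wins_from T s} \<subseteq> {s. I_wins_from T s}"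
proof
  fix s assume "s \<in> rank_step T {s. I_wins_from T s}"
  then obtain n \<sigma>0 where "strategy_I \<sigma>0"
    and stay: "stays_with (reach_or_stay T {s. I_wins_from T s} n (length s)) s \<sigma>0"
    unfolding rank_step_def I_can_stay_def by blast
  define \<sigma>W where "\<sigma>W t = (SOME \<sigma>. strategy_I \<sigma> \<and> (I_wins_from T t \<longrightarrow> wins_I_with T t \<sigma>))" for t
  have \<sigma>W: "strategy_I (\<sigma>W t) \<and> (I_wins_from T t \<longrightarrow> wins_I_with T t (\<sigma>W t))" for t
  proof -
    have "\<exists>\<sigma>. strategy_I \<sigma> \<and> (I_wins_from T t \<longrightarrow> wins_I_with T t \<sigma>)"
      using ex_strategy_I unfolding I_wins_from_def by blast
    then show ?thesis
      unfolding \<sigma>W_def by (rule someI_ex)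
  qed
  have "strategy_I (switch_I (length s) (I_wins_from T) \<sigma>W \<sigma>0)"
    using \<open>strategy_I \<sigma>0\<close> \<sigma>W by (intro strategy_I_switch_I) auto
  moreover have "wins_I_with T s (switch_I (length s) (I_wins_from T) \<sigma>W \<sigma>0)"
    using stay \<sigma>W by (intro wins_I_with_switch_I) auto
  ultimately show "s \<in> {s. I_wins_from T s}"
    unfolding I_wins_from_def by blast
qed

lemma I_wins_from_I_region: "s \<in> I_region T \<Longrightarrow> I_wins_from T s"
  using lfp_lowerbound[of "rank_step T", OF rank_step_I_wins_from] unfolding I_region_def by blast

definition escape_strategy ::
  "(nat \<Rightarrow> ('a \<times> 'b) list set) \<Rightarrow> nat \<Rightarrow> ('a \<times> 'b) list \<Rightarrow> ('a \<times> 'b) list \<Rightarrow> 'a \<Rightarrow> 'b" where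
  "escape_strategy T n t = (SOME \<tau>. strategy_II \<tau> \<and>
     (t \<notin> I_region T \<longrightarrow> escapes_with (reach_or_stay T (I_region T) n (length t)) t \<tau>))"

lemma escape_strategy_escapes: "strategy_II (escape_strategy T n t) \<and>
  (t \<notin> I_region T \<longrightarrow> escapes_with (reach_or_stay T (I_region T) n (length t)) t (escape_strategy T n t))"
proof -
  have "II_can_escape (reach_or_stay T (I_region T) n (length t)) t" if "t \<notin> I_region T"
  proof -
    have "\<not> I_can_stay (reach_or_stay T (I_region T) n (length t)) t"
      using that I_region_fixpoint unfolding rank_step_def by blast
    then show ?thesis
      using closed_game_determined by blast
  qed
  then have "\<exists>\<tau>. strategy_II \<tau> \<and>
     (t \<notin> I_region T \<longrightarrow> escapes_with (reach_or_stay T (I_region T) n (length t)) t \<tau>)"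
    using ex_strategy_II unfolding II_can_escape_def by blast
  then show ?thesis
    unfolding escape_strategy_def by (rule someI_ex)
qed

text \<open>In phase \<open>n\<close>, begun at position \<open>t\<close>, Player II escapes from \<open>T n\<close> without ever entering
  \<open>I_region T\<close>; this is possible as long as \<open>t \<notin> I_region T\<close>.\<close>

definition phased_strategy :: "(nat \<Rightarrow> ('a \<times> 'b) list set) \<Rightarrow> ('a \<times> 'b) list \<Rightarrow> 'a \<Rightarrow> 'b" where
  "phased_strategy T h a =
     (case phase_list T h (length h) of (n, j) \<Rightarrow> escape_strategy T n (take j h) h a)"

lemma strategy_II_phased_strategy: "strategy_II (phased_strategy T)"
  using escape_strategy_escapes unfolding strategy_II_def phased_strategy_def by (simp split: prod.split)

context
  fixes T and p :: "nat \<Rightarrow> 'a \<times> 'b"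
  assumes root: "[] \<notin> I_region T"
    and legal: "legal_play p"
    and phased: "follows_II (phased_strategy T) p 0"
begin

lemma phased_move:
  assumes "phase T p m = (n, j)"
  shows "snd (p m) = escape_strategy T n (pref p j) (pref p m) (fst (p m))"
  using phased phase_constant(1)[OF assms] assms
  unfolding follows_II_def phased_strategy_def phase_def by simp

lemma escape_in_phase:
  assumes ph: "phase T p K = (n, j)" and "pref p j \<notin> I_region T"
    and q: "legal_play q" "\<forall>k<Suc K. q k = p k" "follows_II (escape_strategy T n (pref p j)) q (Suc K)"
  obtains k where "K < k" and "\<forall>j'. j < j' \<longrightarrow> j' \<le> k \<longrightarrow> pref q j' \<notin> I_region T"
    and "\<exists>i\<le>k. pref q i \<notin> T n"
proof -
  have pref_q: "pref q k = pref p k" if "k \<le> Suc K" for k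
    using q(2) that by (simp add: pref_eq_iff)
  have "follows_II (escape_strategy T n (pref p j)) q j"
    unfolding follows_II_def
  proof (intro allI impI)
    fix k assume "j \<le> k"
    show "snd (q k) = escape_strategy T n (pref p j) (pref q k) (fst (q k))"
    proof (cases "k < Suc K")
      case True
      then show ?thesis
        using phased_move phase_constant(2)[OF ph \<open>j \<le> k\<close>] q(2) pref_q by simp
    next
      case False
      then show ?thesis
        using q(3) unfolding follows_II_def by simp
    qed
  qed
  moreover have "pref q j = pref p j"
    using pref_q phase_constant(1)[OF ph] by simp
  ultimately obtain k where k: "j < k" "\<not> reach_or_stay T (I_region T) n j (pref q k)"
    using escape_strategy_escapes[of T n "pref p j"] assms(2) q(1) unfolding escapes_with_def by auto
  then obtain i where i: "i \<le> k" "pref q i \<notin> T n"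
    unfolding reach_or_stay_def by auto
  have "K < k"
  proof (rule ccontr)
    assume "\<not> K < k"
    then have "phase T p k = (n, j)"
      using phase_constant(2)[OF ph] k(1) by simp
    then have "pref p i \<in> T n"
      using phase_inside k(1) i(1) by blast
    then show False
      using i \<open>\<not> K < k\<close> pref_q by simp
  qed
  with k i that show ?thesis
    unfolding reach_or_stay_def by auto
qed

lemma phased_play_avoids_I_region: "pref p K \<notin> I_region T"
proof (induction K rule: less_induct)
  case (less K)
  show ?case
  proof (cases K)
    case 0
    then show ?thesis
      using root by simp
  next
    case (Suc K')
    obtain n j where ph: "phase T p K' = (n, j)"
      by force
    have "pref p j \<notin> I_region T"
      using less.IH phase_constant(1)[OF ph] Suc by simp
    obtain \<sigma> where \<sigma>: "strategy_I \<sigma>"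
      using ex_strategy_I by blast
    obtain q where q: "legal_play q" "\<forall>k<Suc K'. q k = p k" "follows_I \<sigma> q (Suc K')"
      "follows_II (escape_strategy T n (pref p j)) q (Suc K')"
      by (rule exists_continuation[OF legal \<sigma> conjunct1[OF escape_strategy_escapes]])
    obtain k where k: "K' < k" and avoid: "\<forall>j'. j < j' \<longrightarrow> j' \<le> k \<longrightarrow> pref q j' \<notin> I_region T"
      and "\<exists>i\<le>k. pref q i \<notin> T n"
      by (rule escape_in_phase[OF ph \<open>pref p j \<notin> I_region T\<close> q(1,2,4)])
    have "pref q K \<notin> I_region T"
      using avoid phase_constant(1)[OF ph] k Suc by simp
    moreover have "pref q K = pref p K"
      using q(2) Suc by (simp add: pref_eq_iff)
    ultimately show ?thesis
      by simp
  qed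
qed

lemma phase_ends:
  assumes ph: "phase T p K = (n, j)"
  obtains K' where "K < K'" and "phase T p K' \<noteq> (n, j)"
proof -
  have "\<exists>K'>K. phase T p K' \<noteq> (n, j)"
  proof (rule ccontr)
    assume none: "\<not> (\<exists>K'>K. phase T p K' \<noteq> (n, j))"
    have forever: "phase T p K' = (n, j)" if "K \<le> K'" for K'
      using none ph that by (cases "K = K'") auto
    have follows: "follows_II (escape_strategy T n (pref p j)) p (Suc K)"
      unfolding follows_II_def
    proof (intro allI impI)
      fix k assume "Suc K \<le> k"
      then show "snd (p k) = escape_strategy T n (pref p j) (pref p k) (fst (p k))"
        using phased_move[OF forever[of k]] by simp
    qed
    have agree: "\<forall>k<Suc K. p k = p k"
      by simp
    obtain k where k: "K < k" and "\<forall>j'. j < j' \<longrightarrow> j' \<le> k \<longrightarrow> pref p j' \<notin> I_region T"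
      and out: "\<exists>i\<le>k. pref p i \<notin> T n"
      by (rule escape_in_phase[OF ph phased_play_avoids_I_region legal agree follows])
    have "phase T p (Suc k) = (n, j)"
      using forever k by simp
    moreover have "j < Suc k"
      using phase_constant(1)[OF ph] k by simp
    ultimately have "\<forall>i\<le>k. pref p i \<in> T n"
      using phase_inside le_SucI by blast
    with out show False
      by blast
  qed
  then show ?thesis
    using that by blast
qed

lemma phase_advances:
  assumes ph: "phase T p K = (n, j)"
  obtains j' K' where "phase T p K' = (Suc n, j')" and "\<exists>i. pref p i \<notin> T n"
proof -
  obtain K' where "K < K'" "phase T p K' \<noteq> (n, j)"
    by (rule phase_ends[OF ph])
  then have ex: "\<exists>m. K \<le> m \<and> phase T p m \<noteq> (n, j)"
    by (intro exI[of _ K']) simp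
  define m where "m = (LEAST m. K \<le> m \<and> phase T p m \<noteq> (n, j))"
  have m: "K \<le> m" "phase T p m \<noteq> (n, j)"
    using LeastI_ex[OF ex] unfolding m_def by auto
  then obtain m' where m': "m = Suc m'" "K \<le> m'"
    using ph by (cases m) (auto simp: le_Suc_eq)
  have prev: "phase T p m' = (n, j)"
    using not_less_Least[of m' "\<lambda>m. K \<le> m \<and> phase T p m \<noteq> (n, j)"] m' unfolding m_def by auto
  have out: "\<exists>i\<le>m. pref p i \<notin> T n"
    using prev m m' by (auto simp: phase_Suc split: if_splits)
  then have "phase T p m = (Suc n, m)"
    using prev m' by (simp add: phase_Suc)
  with out that show ?thesis
    by blast
qed

lemma phased_play_not_in_Sigma2: "\<not> in_Sigma2 T p"
proof
  assume "in_Sigma2 T p"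
  then obtain n where n: "\<forall>k. pref p k \<in> T n"
    unfolding in_Sigma2_def by blast
  have "\<exists>K j. phase T p K = (n', j)" for n'
  proof (induction n')
    case 0
    then show ?case
      using phase_0 by blast
  next
    case (Suc n')
    then obtain K j where "phase T p K = (n', j)"
      by blast
    then obtain j' K' where "phase T p K' = (Suc n', j')"
      by (rule phase_advances)
    then show ?case
      by blast
  qed
  then obtain K j where "phase T p K = (n, j)"
    by blast
  then obtain j' K' where "\<exists>i. pref p i \<notin> T n"
    by (rule phase_advances)
  with n show False
    by blast
qed

end

theorem Sigma2_game_determined:
  "I_wins_from T [] \<or> (\<exists>\<tau>. strategy_II \<tau> \<and> (\<forall>p. legal_play p \<and> follows_II \<tau> p 0 \<longrightarrow> \<not> in_Sigma2 T p))"
  using I_wins_from_I_region strategy_II_phased_strategy phased_play_not_in_Sigma2 by blast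

end

section \<open>The payoff of \<open>\<H>\<^sub>C\<^sub>a\<^sub>t(I, F)\<close>\<close>

lemma filter_upt_enumerate:
  fixes S :: "nat set"
  assumes S: "infinite S"
  shows "\<exists>m. filter (\<lambda>n. n \<in> S) [0..<k] = map (enumerate S) [0..<m]
    \<and> (\<forall>i. enumerate S i < k \<longleftrightarrow> i < m)"
proof (induction k)
  case 0
  then show ?case
    by (intro exI[of _ 0]) simp
next
  case (Suc k)
  then obtain m where m: "filter (\<lambda>n. n \<in> S) [0..<k] = map (enumerate S) [0..<m]"
    "\<forall>i. enumerate S i < k \<longleftrightarrow> i < m"
    by blast
  show ?case
  proof (cases "k \<in> S")
    case True
    then obtain c where c: "enumerate S c = k"
      using range_enumerate[OF S] by (metis rangeE)
    have "i < c \<longleftrightarrow> i < m" for i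
      using m(2) enumerate_mono_iff[OF S, of i c] c by simp
    then have "c = m"
      by (meson less_irrefl linorder_neqE_nat)
    then have "filter (\<lambda>n. n \<in> S) [0..<Suc k] = map (enumerate S) [0..<Suc m]"
      using m(1) True c by simp
    moreover have "enumerate S i < Suc k \<longleftrightarrow> i < Suc m" for i
      using c \<open>c = m\<close> enumerate_mono_le_iff[OF S, of i m] by (simp add: less_Suc_eq_le)
    ultimately show ?thesis
      by blast
  next
    case False
    then have "enumerate S i \<noteq> k" for i
      using enumerate_in_set[OF S] by metis
    then show ?thesis
      using m False by (intro exI[of _ m]) (auto simp: less_Suc_eq)
  qed
qed

type_synonym H_history = "(nat set \<times> (nat \<times> int)) list"

definition revealed :: "H_history \<Rightarrow> nat list" where
  "revealed h = map (\<lambda>e. nat (snd (snd e))) (filter (\<lambda>e. snd (snd e) \<noteq> -1) h)"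

definition agrees :: "H_history \<Rightarrow> nat list \<Rightarrow> bool" where
  "agrees h u \<longleftrightarrow> (\<forall>i. i < length (revealed h) \<longrightarrow> i < length u \<longrightarrow> revealed h ! i = u ! i)"

context
  fixes p :: "nat \<Rightarrow> nat set \<times> nat \<times> int"
  assumes infinite: "infinite {n. snd (snd (p n)) \<noteq> -1}"
begin

lemma revealed_pref:
  obtains m where "revealed (pref p k) = map (tilde (\<lambda>n. snd (snd (p n)))) [0..<m]"
    and "\<forall>i. enumerate {n. snd (snd (p n)) \<noteq> -1} i < k \<longleftrightarrow> i < m"
proof -
  obtain m where m: "filter (\<lambda>n. n \<in> {n. snd (snd (p n)) \<noteq> -1}) [0..<k]
      = map (enumerate {n. snd (snd (p n)) \<noteq> -1}) [0..<m]"
    "\<forall>i. enumerate {n. snd (snd (p n)) \<noteq> -1} i < k \<longleftrightarrow> i < m"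
    using filter_upt_enumerate[OF infinite] by blast
  have "revealed (pref p k) =
      map (\<lambda>n. nat (snd (snd (p n)))) (filter (\<lambda>n. n \<in> {n. snd (snd (p n)) \<noteq> -1}) [0..<k])"
    unfolding revealed_def pref_def by (simp add: filter_map o_def)
  also have "\<dots> = map (tilde (\<lambda>n. snd (snd (p n)))) [0..<m]"
    unfolding m(1) by (simp add: tilde_def)
  finally show ?thesis
    using that m(2) by blast
qed

lemma nth_revealed_pref:
  "i < length (revealed (pref p k)) \<Longrightarrow> revealed (pref p k) ! i = tilde (\<lambda>n. snd (snd (p n))) i"
  by (rule revealed_pref[of k]) auto

lemma revealed_pref_grows: "\<exists>k. i < length (revealed (pref p k))"
proof
  show "i < length (revealed (pref p (Suc (enumerate {n. snd (snd (p n)) \<noteq> -1} i))))"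
    by (rule revealed_pref[of "Suc (enumerate {n. snd (snd (p n)) \<noteq> -1} i)"]) auto
qed

lemma agrees_tilde: "agrees (pref p k) (map (tilde (\<lambda>n. snd (snd (p n)))) [0..<N])"
  unfolding agrees_def using nth_revealed_pref by simp

lemma tilde_eq_if_agrees:
  assumes "\<forall>k. agrees (pref p k) u" and "i < length u"
  shows "tilde (\<lambda>n. snd (snd (p n))) i = u ! i"
proof -
  obtain k where "i < length (revealed (pref p k))"
    using revealed_pref_grows by blast
  then show ?thesis
    using nth_revealed_pref assms unfolding agrees_def by metis
qed

end

lemma cont_into_P_locally_constant:
  assumes "cont_into_P F"
  obtains N where "\<forall>y. (\<forall>i<N. y i = x i) \<longrightarrow> (k \<in> F y \<longleftrightarrow> k \<in> F x)"
proof -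
  let ?f = "\<lambda>x. chi (F x) k"
  have "continuous_on UNIV ?f"
    using assms unfolding cont_into_P_def by (rule continuous_on_product_then_coordinatewise)
  then have "open (?f -` {?f x})"
    by (metis open_discrete open_vimage)
  then have "openin (product_topology (\<lambda>i. euclidean) UNIV) (?f -` {?f x})"
    unfolding open_fun_def by simp
  from product_topology_open_contains_basis[OF this, of x]
  obtain X where X: "x \<in> (\<Pi>\<^sub>E i\<in>UNIV. X i)" "finite {i. X i \<noteq> UNIV}"
     "(\<Pi>\<^sub>E i\<in>UNIV. X i) \<subseteq> ?f -` {?f x}"
    by auto
  obtain N where N: "\<forall>i\<in>{i. X i \<noteq> UNIV}. i < N"
    using X(2) by (meson finite_nat_set_iff_bounded)
  have "k \<in> F y \<longleftrightarrow> k \<in> F x" if "\<forall>i<N. y i = x i" for y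
  proof -
    have "y \<in> (\<Pi>\<^sub>E i\<in>UNIV. X i)"
      using X(1) N that by (auto simp: PiE_iff) (metis UNIV_I)
    then have "?f y = ?f x"
      using X(3) by auto
    then show ?thesis
      by (auto simp: chi_def split: if_splits)
  qed
  with that show ?thesis
    by blast
qed

text \<open>Player II loses a play of \<open>\<H>\<^sub>C\<^sub>a\<^sub>t(I, F)\<close>, with \<open>x = tilde g\<close>, in one of three ways, each of
  them a closed condition on the play: \<open>g\<close> takes only the value \<open>-1\<close> from round \<open>N\<close> on; some
  \<open>k \<in> F x\<close>, already decided by an initial segment \<open>u\<close> of \<open>x\<close>, is never played; or the move
  \<open>b\<^sub>n\<close> is some \<open>c\<close> such that \<open>c \<notin> F x\<close> is decided by \<open>u\<close>.  This makes the payoff set of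
  Player I a \<open>\<Sigma>\<^sup>0\<^sub>2\<close> set.\<close>

datatype H_piece = Stops nat | Omits nat "nat list" | Adds nat nat "nat list"

instance H_piece :: countable
  by countable_datatype

definition decides :: "((nat \<Rightarrow> nat) \<Rightarrow> nat set) \<Rightarrow> nat \<Rightarrow> nat list \<Rightarrow> bool \<Rightarrow> bool" where
  "decides F k u v \<longleftrightarrow> (\<forall>y. (\<forall>i<length u. y i = u ! i) \<longrightarrow> (k \<in> F y \<longleftrightarrow> v))"

fun H_loss :: "((nat \<Rightarrow> nat) \<Rightarrow> nat set) \<Rightarrow> H_piece \<Rightarrow> H_history set" where
  "H_loss F (Stops N) = {h. \<forall>i<length h. N \<le> i \<longrightarrow> snd (snd (h ! i)) = -1}"
| "H_loss F (Omits k u) =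
     {h. decides F k u True \<and> agrees h u \<and> (\<forall>i<length h. fst (snd (h ! i)) \<noteq> k)}"
| "H_loss F (Adds n c u) =
     {h. decides F c u False \<and> agrees h u \<and> (n < length h \<longrightarrow> fst (snd (h ! n)) = c)}"

definition H_loss_seq :: "((nat \<Rightarrow> nat) \<Rightarrow> nat set) \<Rightarrow> nat \<Rightarrow> H_history set" where
  "H_loss_seq F n = H_loss F (from_nat n)"

lemma cont_into_P_decides:
  assumes "cont_into_P F"
  obtains N where "decides F k (map x [0..<N]) (k \<in> F x)"
proof -
  obtain N where N: "\<forall>y. (\<forall>i<N. y i = x i) \<longrightarrow> (k \<in> F y \<longleftrightarrow> k \<in> F x)"
    by (rule cont_into_P_locally_constant[OF assms])
  have "decides F k (map x [0..<N]) (k \<in> F x)"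
    unfolding decides_def
  proof (intro allI impI)
    fix y assume "\<forall>i<length (map x [0..<N]). y i = map x [0..<N] ! i"
    then have "\<forall>i<N. y i = x i"
      by simp
    then show "k \<in> F y \<longleftrightarrow> k \<in> F x"
      using N by blast
  qed
  with that show ?thesis
    by blast
qed

lemma H_loss_imp_not_H_II_wins:
  fixes p :: "nat \<Rightarrow> nat set \<times> nat \<times> int"
  assumes loss: "\<forall>k. pref p k \<in> H_loss F z"
  shows "\<not> H_II_wins F (\<lambda>n. snd (p n))"
proof
  let ?x = "tilde (\<lambda>n. snd (snd (p n)))" and ?b = "\<lambda>n. fst (snd (p n))"
  assume "H_II_wins F (\<lambda>n. snd (p n))"
  then have inf: "infinite {n. snd (snd (p n)) \<noteq> -1}" and eq: "F ?x = range ?b"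
    unfolding H_II_wins_def by simp_all
  show False
  proof (cases z)
    case (Stops N)
    then have "snd (snd (p i)) = -1" if "N \<le> i" for i
      using loss[rule_format, of "Suc i"] that by simp
    then have "{n. snd (snd (p n)) \<noteq> -1} \<subseteq> {..<N}"
      using not_le by auto
    then show False
      using inf finite_subset by blast
  next
    case (Omits k u)
    then have "decides F k u True" and "\<forall>k. agrees (pref p k) u"
      using loss by auto
    then have "k \<in> F ?x"
      using tilde_eq_if_agrees[OF inf] unfolding decides_def by blast
    moreover have "?b i \<noteq> k" for i
      using loss[rule_format, of "Suc i"] Omits by simp
    ultimately show False
      using eq by auto
  next
    case (Adds n c u)
    then have "decides F c u False" and "\<forall>k. agrees (pref p k) u"
      using loss by auto
    then have "c \<notin> F ?x"
      using tilde_eq_if_agrees[OF inf] unfolding decides_def by blast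
    moreover have "?b n = c"
      using loss[rule_format, of "Suc n"] Adds by simp
    ultimately show False
      using eq by auto
  qed
qed

lemma not_H_II_wins_imp_H_loss:
  fixes p :: "nat \<Rightarrow> nat set \<times> nat \<times> int"
  assumes cont: "cont_into_P F" and lost: "\<not> H_II_wins F (\<lambda>n. snd (p n))"
  shows "\<exists>z. \<forall>k. pref p k \<in> H_loss F z"
proof (cases "infinite {n. snd (snd (p n)) \<noteq> -1}")
  case False
  then obtain N where "\<forall>n\<in>{n. snd (snd (p n)) \<noteq> -1}. n < N"
    using finite_nat_set_iff_bounded by blast
  then have "pref p k \<in> H_loss F (Stops N)" for k
    using not_le by auto
  then show ?thesis
    by blast
next
  case True
  let ?x = "tilde (\<lambda>n. snd (snd (p n)))" and ?b = "\<lambda>n. fst (snd (p n))"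
  have "F ?x \<noteq> range ?b"
    using lost True unfolding H_II_wins_def by simp
  then consider k where "k \<in> F ?x" "k \<notin> range ?b" | n where "?b n \<notin> F ?x"
    by blast
  then show ?thesis
  proof cases
    case (1 k)
    then obtain N where "decides F k (map ?x [0..<N]) True"
      using cont_into_P_decides[OF cont, of k ?x] by auto
    then have "pref p m \<in> H_loss F (Omits k (map ?x [0..<N]))" for m
      using 1 agrees_tilde[OF True] by auto
    then show ?thesis
      by blast
  next
    case (2 n)
    then obtain N where "decides F (?b n) (map ?x [0..<N]) False"
      using cont_into_P_decides[OF cont, of "?b n" ?x] by auto
    then have "pref p m \<in> H_loss F (Adds n (?b n) (map ?x [0..<N]))" for m
      using agrees_tilde[OF True] by auto
    then show ?thesis
      by blast
  qed
qed

lemma in_Sigma2_H_loss_seq_iff: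
  assumes "cont_into_P F"
  shows "in_Sigma2 (H_loss_seq F) p \<longleftrightarrow> \<not> H_II_wins F (\<lambda>n. snd (p n))"
proof -
  have "in_Sigma2 (H_loss_seq F) p \<longleftrightarrow> (\<exists>z. \<forall>k. pref p k \<in> H_loss F z)"
    unfolding in_Sigma2_def H_loss_seq_def by (metis from_nat_to_nat)
  then show ?thesis
    using H_loss_imp_not_H_II_wins not_H_II_wins_imp_H_loss[OF assms] by blast
qed

section \<open>Determinacy of \<open>\<H>\<^sub>C\<^sub>a\<^sub>t(I, F)\<close> and \<open>\<G>\<^sub>C\<^sub>a\<^sub>t(I)\<close>\<close>

lemma
  assumes "ideal_on_omega I"
  shows ideal_on_omega_Un: "A \<in> I \<Longrightarrow> B \<in> I \<Longrightarrow> A \<union> B \<in> I"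
    and ideal_on_omega_finite: "finite A \<Longrightarrow> A \<in> I"
    and ideal_on_omega_UNIV: "UNIV \<notin> I"
  using assms unfolding ideal_on_omega_def by auto

lemma ideal_on_omega_finite_Union:
  assumes ideal: "ideal_on_omega I" and "finite X" and "X \<subseteq> I"
  shows "\<Union>X \<in> I"
  using assms(2,3)
  by (induction X rule: finite_induct)
    (simp_all add: ideal_on_omega_finite[OF ideal] ideal_on_omega_Un[OF ideal])

definition H_moves_II :: "H_history \<Rightarrow> nat set \<Rightarrow> (nat \<times> int) set" where
  "H_moves_II h A = {bm. H_legal A (length h) bm}"

lemma legal_game_H:
  assumes "ideal_on_omega I"
  shows "legal_game (\<lambda>h::H_history. I) H_moves_II"
proof
  show "I \<noteq> {}"
    using ideal_on_omega_finite[OF assms, of "{}"] by blast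
next
  fix A and h :: H_history
  assume "A \<in> I"
  then obtain b where "b \<notin> A"
    using ideal_on_omega_UNIV[OF assms] by (metis UNIV_eq_I)
  then have "(b, -1) \<in> H_moves_II h A"
    unfolding H_moves_II_def H_legal_def by simp
  then show "H_moves_II h A \<noteq> {}"
    by blast
qed

definition history_I :: "(H_history \<Rightarrow> nat set) \<Rightarrow> (nat \<times> int) list \<Rightarrow> H_history" where
  "history_I \<sigma> bs = foldl (\<lambda>h b. h @ [(\<sigma> h, b)]) [] bs"

definition history_II :: "(H_history \<Rightarrow> nat set \<Rightarrow> nat \<times> int) \<Rightarrow> nat set list \<Rightarrow> H_history" where
  "history_II \<tau> As = foldl (\<lambda>h A. h @ [(A, \<tau> h A)]) [] As"

lemma history_I_snoc: "history_I \<sigma> (bs @ [b]) = history_I \<sigma> bs @ [(\<sigma> (history_I \<sigma> bs), b)]"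
  by (simp add: history_I_def)

lemma history_II_snoc: "history_II \<tau> (As @ [A]) = history_II \<tau> As @ [(A, \<tau> (history_II \<tau> As) A)]"
  by (simp add: history_II_def)

lemma length_history_I [simp]: "length (history_I \<sigma> bs) = length bs"
  unfolding history_I_def by (induction bs rule: rev_induct) auto

lemma length_history_II [simp]: "length (history_II \<tau> As) = length As"
  unfolding history_II_def by (induction As rule: rev_induct) auto

context
  fixes I :: "nat set set" and F :: "(nat \<Rightarrow> nat) \<Rightarrow> nat set"
  assumes ideal: "ideal_on_omega I" and cont: "cont_into_P F"
begin

interpretation H: legal_game "\<lambda>h::H_history. I" H_moves_II
  by (rule legal_game_H[OF ideal])

lemma H_I_winning_if_game_winning:
  assumes strategy: "H.strategy_I \<sigma>"
    and wins: "\<forall>p. H.legal_play p \<and> H.follows_I \<sigma> p 0 \<longrightarrow> in_Sigma2 (H_loss_seq F) p"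
  shows "H_I_winning I F (\<lambda>bs. \<sigma> (history_I \<sigma> bs))"
  unfolding H_I_winning_def H_I_strategy_def
proof (intro conjI allI impI)
  show "\<sigma> (history_I \<sigma> bs) \<in> I" for bs
    using strategy unfolding H.strategy_I_def by blast
next
  fix bm :: "nat \<Rightarrow> nat \<times> int"
  assume legal: "\<forall>n. H_legal (\<sigma> (history_I \<sigma> (pref bm n))) n (bm n)"
  define p where "p n = (\<sigma> (history_I \<sigma> (pref bm n)), bm n)" for n
  have pref_p: "pref p n = history_I \<sigma> (pref bm n)" for n
    by (induction n) (simp_all add: pref_Suc history_I_snoc p_def, simp add: history_I_def)
  have "H.legal_play p"
    using strategy legal unfolding H.legal_play_def H.strategy_I_def H_moves_II_def pref_p
    by (simp add: p_def)
  moreover have "H.follows_I \<sigma> p 0"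
    unfolding H.follows_I_def pref_p by (simp add: p_def)
  ultimately have "\<not> H_II_wins F (\<lambda>n. snd (p n))"
    using wins in_Sigma2_H_loss_seq_iff[OF cont] by blast
  then show "\<not> H_II_wins F bm"
    by (simp add: p_def)
qed

lemma H_II_winning_if_game_winning:
  assumes strategy: "H.strategy_II \<tau>"
    and wins: "\<forall>p. H.legal_play p \<and> H.follows_II \<tau> p 0 \<longrightarrow> \<not> in_Sigma2 (H_loss_seq F) p"
  shows "H_II_winning I F (\<lambda>As. \<tau> (history_II \<tau> (butlast As)) (last As))"
  unfolding H_II_winning_def H_II_strategy_def
proof (intro conjI allI impI)
  fix As :: "nat set list"
  assume "As \<noteq> []" and "set As \<subseteq> I"
  then have "last As \<in> I"
    by auto
  then have "\<tau> (history_II \<tau> (butlast As)) (last As) \<in> H_moves_II (history_II \<tau> (butlast As)) (last As)"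
    using strategy unfolding H.strategy_II_def by blast
  then show "H_legal (last As) (length As - 1) (\<tau> (history_II \<tau> (butlast As)) (last As))"
    unfolding H_moves_II_def by simp
next
  fix A :: "nat \<Rightarrow> nat set"
  assume AI: "\<forall>n. A n \<in> I"
  define p where "p n = (A n, \<tau> (history_II \<tau> (pref A n)) (A n))" for n
  have pref_p: "pref p n = history_II \<tau> (pref A n)" for n
    by (induction n) (simp_all add: pref_Suc history_II_snoc p_def, simp add: history_II_def)
  have "H.legal_play p"
    using strategy AI unfolding H.legal_play_def H.strategy_II_def pref_p by (simp add: p_def)
  moreover have "H.follows_II \<tau> p 0"
    unfolding H.follows_II_def pref_p by (simp add: p_def)
  ultimately have "H_II_wins F (\<lambda>n. snd (p n))"
    using wins in_Sigma2_H_loss_seq_iff[OF cont] by blast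
  then show "H_II_wins F (\<lambda>n. \<tau> (history_II \<tau> (butlast (pref A (Suc n)))) (last (pref A (Suc n))))"
    by (simp add: p_def pref_Suc)
qed

lemma H_Cat_determined_if_continuous: "H_Cat_determined I F"
  using H.Sigma2_game_determined[of "H_loss_seq F"]
  unfolding H_Cat_determined_def H.I_wins_from_def H.wins_I_with_def
  using H_I_winning_if_game_winning H_II_winning_if_game_winning by auto

end

lemma strict_mono_range_unique:
  fixes f g :: "nat \<Rightarrow> 'a::linorder"
  assumes f: "strict_mono f" and g: "strict_mono g" and range: "range f = range g"
  shows "f = g"
proof
  fix i
  show "f i = g i"
  proof (induction i rule: less_induct)
    case (less i)
    obtain j where j: "f i = g j"
      using range by (metis rangeE rangeI)
    obtain k where k: "g i = f k"
      using range by (metis rangeE rangeI)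
    show ?case
    proof (rule linorder_cases[of j i])
      assume "j < i"
      then have "f i = f j"
        using j less.IH by simp
      then show ?thesis
        using \<open>j < i\<close> strict_mono_eq[OF f] by simp
    next
      assume "i < j"
      then have "g i < g j"
        using g by (simp add: strict_mono_less)
      then have "f k < f i"
        using j k by simp
      then have "k < i"
        using f by (simp add: strict_mono_less)
      then have "g i = g k"
        using k less.IH by simp
      then show ?thesis
        using \<open>k < i\<close> strict_mono_eq[OF g] by simp
    qed (use j in simp)
  qed
qed

text \<open>The value \<open>x i\<close> is announced in round \<open>\<Sum>j\<le>i. x j + 1\<close>, which exceeds \<open>x i\<close> as the rule
  \<open>m\<^sub>n < n\<close> demands.\<close>

lemma exists_H_moves_with_tilde:
  obtains g :: "nat \<Rightarrow> int"
  where "\<forall>n. -1 \<le> g n \<and> g n < int n" and "infinite {n. g n \<noteq> -1}" and "tilde g = x"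
proof
  define ns where "ns i = (\<Sum>j<Suc i. Suc (x j))" for i
  define g where "g n = (if n \<in> range ns then int (x (inv ns n)) else -1)" for n
  have "strict_mono ns"
    unfolding strict_mono_Suc_iff ns_def by simp
  then have inj: "inj ns"
    by (rule strict_mono_imp_inj_on)
  have g_ns: "g (ns i) = int (x i)" for i
    unfolding g_def using inj by simp
  have support: "{n. g n \<noteq> -1} = range ns"
    unfolding g_def by auto
  show "infinite {n. g n \<noteq> -1}"
    using support inj by (simp add: range_inj_infinite)
  then have "enumerate {n. g n \<noteq> -1} = ns"
    using strict_mono_range_unique[OF strict_mono_enumerate \<open>strict_mono ns\<close>]
      range_enumerate support by metis
  then show "tilde g = x"
    unfolding tilde_def using g_ns by (simp add: fun_eq_iff)
  have "x i < ns i" for i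
    unfolding ns_def by simp
  then show "\<forall>n. -1 \<le> g n \<and> g n < int n"
    unfolding g_def by (auto simp: inv_f_f[OF inj])
qed

definition m_histories :: "nat \<Rightarrow> int list set" where
  "m_histories n = {ms. length ms = n \<and> (\<forall>i<n. -1 \<le> ms ! i \<and> ms ! i < int i)}"

lemma finite_m_histories: "finite (m_histories n)"
proof (rule finite_subset)
  show "m_histories n \<subseteq> {ms. set ms \<subseteq> {-1..int n} \<and> length ms = n}"
    unfolding m_histories_def by (force simp: in_set_conv_nth)
  show "finite {ms. set ms \<subseteq> {-1..int n} \<and> length ms = n}"
    by (rule finite_lists_length_eq) simp
qed

lemma G_I_winning_if_H_I_winning:
  assumes ideal: "ideal_on_omega I" and onto: "range F = Iplus I" and win: "H_I_winning I F \<sigma>"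
  shows "G_I_winning I (\<lambda>bs. \<Union>ms\<in>m_histories (length bs). \<sigma> (zip bs ms))"
  unfolding G_I_winning_def G_I_strategy_def
proof (intro conjI allI impI)
  have "\<sigma> s \<in> I" for s
    using win unfolding H_I_winning_def H_I_strategy_def by blast
  then show "(\<Union>ms\<in>m_histories (length bs). \<sigma> (zip bs ms)) \<in> I" for bs
    by (intro ideal_on_omega_finite_Union[OF ideal]) (auto simp: finite_m_histories)
next
  fix b :: "nat \<Rightarrow> nat"
  assume legal: "\<forall>n. b n \<notin> (\<Union>ms\<in>m_histories (length (pref b n)). \<sigma> (zip (pref b n) ms))"
  show "range b \<notin> Iplus I"
  proof
    assume "range b \<in> Iplus I"
    then obtain x where x: "F x = range b"
      using onto by (metis imageE)
    obtain g where g: "\<forall>n. -1 \<le> g n \<and> g n < int n" "infinite {n. g n \<noteq> -1}" "tilde g = x"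
      by (rule exists_H_moves_with_tilde)
    define bm where "bm n = (b n, g n)" for n
    have "b n \<notin> \<sigma> (pref bm n)" for n
    proof -
      have "pref g n \<in> m_histories n"
        unfolding m_histories_def using g(1) by simp
      moreover have "pref bm n = zip (pref b n) (pref g n)"
        by (rule nth_equalityI) (simp_all add: bm_def)
      ultimately show ?thesis
        using legal[rule_format, of n] by auto
    qed
    then have "H_legal (\<sigma> (pref bm n)) n (bm n)" for n
      using g(1) unfolding H_legal_def bm_def by simp
    then have "\<not> H_II_wins F bm"
      using win unfolding H_I_winning_def by blast
    moreover have "H_II_wins F bm"
      unfolding H_II_wins_def bm_def using g x by simp
    ultimately show False
      by contradiction
  qed
qed

lemma G_II_winning_if_H_II_winning:
  assumes onto: "range F = Iplus I" and win: "H_II_winning I F \<tau>"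
  shows "G_II_winning I (\<lambda>As. fst (\<tau> As))"
  unfolding G_II_winning_def G_II_strategy_def
proof (intro conjI allI impI)
  fix As :: "nat set list"
  assume "As \<noteq> []" and "set As \<subseteq> I"
  then have "H_legal (last As) (length As - 1) (\<tau> As)"
    using win unfolding H_II_winning_def H_II_strategy_def by blast
  then show "fst (\<tau> As) \<notin> last As"
    unfolding H_legal_def by simp
next
  fix A :: "nat \<Rightarrow> nat set"
  assume "\<forall>n. A n \<in> I"
  then have "H_II_wins F (\<lambda>n. \<tau> (pref A (Suc n)))"
    using win unfolding H_II_winning_def by blast
  then have "range (\<lambda>n. fst (\<tau> (pref A (Suc n)))) = F (tilde (\<lambda>n. snd (\<tau> (pref A (Suc n)))))"
    unfolding H_II_wins_def by simp
  also have "\<dots> \<in> Iplus I"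
    using onto by blast
  finally show "range (\<lambda>n. fst (\<tau> (pref A (Suc n)))) \<in> Iplus I" .
qed

theorem proposition49:
  fixes I :: "nat set set" and F :: "(nat \<Rightarrow> nat) \<Rightarrow> nat set"
  assumes "ideal_on_omega I" and "coanalytic_P I"
    and "cont_into_P F" and "range F = Iplus I"
  shows "H_Cat_determined I F \<and> G_Cat_determined I"
proof
  show "H_Cat_determined I F"
    using assms(1,3) by (rule H_Cat_determined_if_continuous)
  then show "G_Cat_determined I"
    unfolding H_Cat_determined_def G_Cat_determined_def
  proof (elim disjE exE)
    fix \<sigma> assume "H_I_winning I F \<sigma>"
    then show "(\<exists>\<sigma>. G_I_winning I \<sigma>) \<or> (\<exists>\<tau>. G_II_winning I \<tau>)"
      using G_I_winning_if_H_I_winning[OF assms(1,4)] by blast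
  next
    fix \<tau> assume "H_II_winning I F \<tau>"
    then show "(\<exists>\<sigma>. G_I_winning I \<sigma>) \<or> (\<exists>\<tau>. G_II_winning I \<tau>)"
      using G_II_winning_if_H_II_winning[OF assms(4)] by blast
  qed
qed

end
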